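(* Let $S$ be a $(2,\omega)$-divisible Cu-semigroup satisfying (O5), (O6) and (O7), and let $\iota\colon S_{\mathrm{soft}}\to S$ be the inclusion. Then the map $\iota^*\colon F(S)\to F(S_{\mathrm{soft}})$, $\lambda\mapsto\lambda\circ\iota$, is a homeomorphism.
   Context: A Cu-semigroup is a positively ordered commutative monoid satisfying (O1)–(O4): increasing sequences have suprema; each element is the supremum of a $\ll$-increasing sequence; $x'\ll x,y'\ll y\Rightarrow x'+y'\ll x+y$; suprema of increasing sequences are additive. $x\ll y$ means whenever $y\le\sup z_n$ for increasing $(z_n)$, $x\le z_m$ for some $m$. (O5): if $x+y\le z$, $x'\ll x$, $y'\ll y$ then some $c$ has $y'\ll c$ and $x'+c\le z\le x+c$. (O6): if $x'\ll x\le y+z$ then some $v,w$ have $v\le x,y$, $w\le x,z$, $x'\le v+w$. (O7): if $x'\ll x\le w$, $y'\ll y\le w$ then some $z$ has $x',y'\ll z\le w,x+y$. $\infty x=\sup_n nx$. $x$ is strongly soft if for every $x'\ll x$ there is $t$ with $x'+t\ll x$ and $x'\ll\infty t$; $S_{\mathrm{soft}}$ is the set of strongly soft elements, which under these hypotheses is a sub-Cu-semigroup satisfying (O5). $S$ is $(2,\omega)$-divisible if for $x'\ll x$ there is $y$ with $2y\le x$, $x'\le\infty y$. For a Cu-semigroup $T$ satisfying (O5), $F(T)$ is the set of monoid morphisms $T\to[0,\infty]$ preserving order and suprema of increasing sequences, equipped with its standard compact Hausdorff topology (the topology in which $\lambda_i\to\lambda$ iff $\limsup_i\lambda_i(x')\le\lambda(x)\le\liminf_i\lambda_i(x)$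 for all $x'\ll x$). *)

theory Defs
  imports "HOL-Analysis.Analysis" "HOL-Library.Extended_Nonnegative_Real" "HOL-Library.Liminf_Limsup"
begin

(* Everything is relative to a carrier T inside an ambient ordered commutative monoid 'a.
   For S itself we take T = UNIV; for S_soft we take T = soft_set. *)

definition is_lub :: "'a::order set \<Rightarrow> 'a \<Rightarrow> (nat \<Rightarrow> 'a) \<Rightarrow> bool" where
  "is_lub T s z \<longleftrightarrow> s \<in> T \<and> (\<forall>n. z n \<le> s) \<and> (\<forall>u\<in>T. (\<forall>n. z n \<le> u) \<longrightarrow> s \<le> u)"

definition way_below :: "'a::order set \<Rightarrow> 'a \<Rightarrow> 'a \<Rightarrow> bool" where
  "way_below T x y \<longleftrightarrow> (\<forall>z s. (\<forall>n. z n \<in> T) \<and> incseq z \<and> is_lub T s z \<and> y \<le> s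
       \<longrightarrow> (\<exists>m. x \<le> z m))"

definition nmul :: "nat \<Rightarrow> 'a::comm_monoid_add \<Rightarrow> 'a" where
  "nmul n x = (((+) x) ^^ n) 0"

definition le_infty :: "'a::{order,comm_monoid_add} set \<Rightarrow> 'a \<Rightarrow> 'a \<Rightarrow> bool" where
  "le_infty T x t \<longleftrightarrow> (\<exists>s. is_lub T s (\<lambda>n. nmul n t) \<and> x \<le> s)"

definition Cu_semigroup :: "'a::ordered_comm_monoid_add set \<Rightarrow> bool" where
  "Cu_semigroup T \<longleftrightarrow>
     0 \<in> T \<and> (\<forall>x\<in>T. \<forall>y\<in>T. x + y \<in> T) \<and> (\<forall>x\<in>T. 0 \<le> x)
   \<and> (\<forall>z. (\<forall>n. z n \<in> T) \<and> incseq z \<longrightarrow> (\<exists>s. is_lub T s z))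
   \<and> (\<forall>x\<in>T. \<exists>z. (\<forall>n. z n \<in> T) \<and> (\<forall>n. way_below T (z n) (z (Suc n))) \<and> is_lub T x z)
   \<and> (\<forall>x'\<in>T. \<forall>x\<in>T. \<forall>y'\<in>T. \<forall>y\<in>T. way_below T x' x \<and> way_below T y' y
         \<longrightarrow> way_below T (x' + y') (x + y))
   \<and> (\<forall>z w s t. (\<forall>n. z n \<in> T) \<and> (\<forall>n. w n \<in> T) \<and> incseq z \<and> incseq w
         \<and> is_lub T s z \<and> is_lub T t w \<longrightarrow> is_lub T (s + t) (\<lambda>n. z n + w n))"

definition O5 :: "'a::ordered_comm_monoid_add set \<Rightarrow> bool" where
  "O5 T \<longleftrightarrow> (\<forall>x\<in>T. \<forall>y\<in>T. \<forall>z\<in>T. \<forall>x'\<in>T. \<forall>y'\<in>T.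
     x + y \<le> z \<and> way_below T x' x \<and> way_below T y' y \<longrightarrow>
     (\<exists>c\<in>T. way_below T y' c \<and> x' + c \<le> z \<and> z \<le> x + c))"

definition O6 :: "'a::ordered_comm_monoid_add set \<Rightarrow> bool" where
  "O6 T \<longleftrightarrow> (\<forall>x'\<in>T. \<forall>x\<in>T. \<forall>y\<in>T. \<forall>z\<in>T.
     way_below T x' x \<and> x \<le> y + z \<longrightarrow>
     (\<exists>v\<in>T. \<exists>w\<in>T. v \<le> x \<and> v \<le> y \<and> w \<le> x \<and> w \<le> z \<and> x' \<le> v + w))"

definition O7 :: "'a::ordered_comm_monoid_add set \<Rightarrow> bool" where
  "O7 T \<longleftrightarrow> (\<forall>x'\<in>T. \<forall>x\<in>T. \<forall>y'\<in>T. \<forall>y\<in>T. \<forall>w\<in>T.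
     way_below T x' x \<and> x \<le> w \<and> way_below T y' y \<and> y \<le> w \<longrightarrow>
     (\<exists>z\<in>T. way_below T x' z \<and> way_below T y' z \<and> z \<le> w \<and> z \<le> x + y))"

definition two_omega_divisible :: "'a::ordered_comm_monoid_add set \<Rightarrow> bool" where
  "two_omega_divisible T \<longleftrightarrow> (\<forall>x'\<in>T. \<forall>x\<in>T. way_below T x' x \<longrightarrow>
     (\<exists>y\<in>T. y + y \<le> x \<and> le_infty T x' y))"

definition strongly_soft :: "'a::ordered_comm_monoid_add \<Rightarrow> bool" where
  "strongly_soft x \<longleftrightarrow> (\<forall>x'. way_below UNIV x' x \<longrightarrow>
     (\<exists>t. way_below UNIV (x' + t) x \<and> le_infty UNIV x' t))"

definition soft_set :: "'a::ordered_comm_monoid_add set" where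
  "soft_set = {x. strongly_soft x}"

(* functionals F(T); represented as functions vanishing off T *)
definition functionals :: "'a::ordered_comm_monoid_add set \<Rightarrow> ('a \<Rightarrow> ennreal) set" where
  "functionals T = {\<mu>. (\<forall>x. x \<notin> T \<longrightarrow> \<mu> x = 0) \<and> \<mu> 0 = 0
     \<and> (\<forall>x\<in>T. \<forall>y\<in>T. \<mu> (x + y) = \<mu> x + \<mu> y)
     \<and> (\<forall>x\<in>T. \<forall>y\<in>T. x \<le> y \<longrightarrow> \<mu> x \<le> \<mu> y)
     \<and> (\<forall>z s. (\<forall>n. z n \<in> T) \<and> incseq z \<and> is_lub T s z \<longrightarrow> \<mu> s = (SUP n. \<mu> (z n)))}"

definition F_conv :: "'a::ordered_comm_monoid_add set \<Rightarrow> ('a \<Rightarrow> ennreal) filter \<Rightarrow> ('a \<Rightarrow> ennreal) \<Rightarrow> bool" where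
  "F_conv T F \<mu> \<longleftrightarrow> (\<forall>x'\<in>T. \<forall>x\<in>T. way_below T x' x \<longrightarrow>
      Limsup F (\<lambda>\<nu>. \<nu> x') \<le> \<mu> x \<and> \<mu> x \<le> Liminf F (\<lambda>\<nu>. \<nu> x))"

(* the topology on F(T) whose convergent nets are exactly the F_conv ones *)
definition F_open :: "'a::ordered_comm_monoid_add set \<Rightarrow> ('a \<Rightarrow> ennreal) set \<Rightarrow> bool" where
  "F_open T U \<longleftrightarrow> U \<subseteq> functionals T \<and>
     (\<forall>\<mu>\<in>U. \<forall>F. eventually (\<lambda>\<nu>. \<nu> \<in> functionals T) F \<and> F_conv T F \<mu>
        \<longrightarrow> eventually (\<lambda>\<nu>. \<nu> \<in> U) F)"

lemma F_open_Int: "F_open T S \<Longrightarrow> F_open T U \<Longrightarrow> F_open T (S \<inter> U)"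
  unfolding F_open_def by (auto simp: eventually_conj_iff)

lemma F_open_Union: "(\<And>S. S \<in> K \<Longrightarrow> F_open T S) \<Longrightarrow> F_open T (\<Union>K)"
  unfolding F_open_def
  by (smt (verit, ccfv_SIG) UnionE UnionI Union_least eventually_mono)

lemma istopology_F_open: "istopology (F_open T)"
  unfolding istopology_def using F_open_Int F_open_Union by blast

definition F_topology :: "'a::ordered_comm_monoid_add set \<Rightarrow> ('a \<Rightarrow> ennreal) topology" where
  "F_topology T = topology (F_open T)"

end

theory Submission
  imports Defs
begin

text \<open>
  The inverse of restriction to \<open>S\<^sub>s\<^sub>o\<^sub>f\<^sub>t\<close> is the extension
  \<open>\<rho> \<mapsto> (x \<mapsto> sup {\<rho> s | s soft, s \<le> x})\<close>. Everything rests on soft elements being almost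
  cofinal below every element: if \<open>x' \<lless> x\<close> then for each \<open>n\<close> there is a soft \<open>s \<le> x\<close> with
  \<open>n x' \<le> (n + 1) s\<close>, so every functional satisfies \<open>\<lambda>(x') \<le> (1 + 1/n) sup {\<lambda>(s) | s soft, s \<le> x}\<close>.
  Soft elements are produced as suprema of sequences \<open>p\<^sub>k\<^sub>+\<^sub>1 = p\<^sub>k + t\<^sub>k\<close> with
  \<open>p\<^sub>k \<le> \<infinity> t\<^sub>k\<close>, built by repeatedly halving the room left below \<open>x\<close> with
  \<open>(2,\<omega>)\<close>-divisibility; (O5)--(O7) are used to fit \<open>n\<close> copies of \<open>x'\<close> into \<open>n + 1\<close> copies of
  such a sequence's starting point. The same estimate, applied along nets, makes the extension
  continuous.
\<close>

section \<open>Multiples, suprema and the way-below relation\<close>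

lemma nmul_0 [simp]: "nmul 0 x = 0"
  by (simp add: nmul_def)

lemma nmul_Suc [simp]: "nmul (Suc n) x = x + nmul n x"
  by (simp add: nmul_def)

lemma nmul_add: "nmul (m + n) x = nmul m x + nmul n x"
  by (induction m) (auto simp: add.assoc)

lemma nmul_add_distrib: "nmul n (x + y) = nmul n x + nmul n (y::'a::comm_monoid_add)"
  by (induction n) (auto simp: algebra_simps)

lemma nmul_mult: "nmul (m * n) x = nmul m (nmul n x)"
  by (induction m) (auto simp: nmul_add nmul_add_distrib)

lemma nmul_mono: "x \<le> y \<Longrightarrow> nmul n x \<le> nmul n (y::'a::ordered_comm_monoid_add)"
  by (induction n) (auto intro: add_mono)

lemma incseq_nmul_seq: "incseq z \<Longrightarrow> incseq (\<lambda>k. nmul n (z k :: 'a::ordered_comm_monoid_add))"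
  unfolding incseq_def by (blast intro: nmul_mono)

lemma nmul_mono_count:
  assumes "0 \<le> x" "m \<le> n"
  shows "nmul m x \<le> nmul n (x::'a::ordered_comm_monoid_add)"
proof -
  obtain k where "n = k + m" using \<open>m \<le> n\<close> le_add_diff_inverse2 by metis
  moreover have "0 \<le> nmul k x" using \<open>0 \<le> x\<close> by (induction k) (auto simp: add_nonneg_nonneg)
  ultimately show ?thesis by (simp add: nmul_add add_increasing)
qed

abbreviation way_below_UNIV :: "'a::order \<Rightarrow> 'a \<Rightarrow> bool" (infix "\<lless>" 50)
  where "x \<lless> y \<equiv> way_below UNIV x y"

lemma is_lub_upper: "is_lub T s z \<Longrightarrow> z n \<le> s"
  unfolding is_lub_def by auto

lemma is_lub_least: "is_lub T s z \<Longrightarrow> u \<in> T \<Longrightarrow> (\<And>n. z n \<le> u) \<Longrightarrow> s \<le> u"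
  unfolding is_lub_def by auto

lemma is_lub_unique: "is_lub T s z \<Longrightarrow> is_lub T s' z \<Longrightarrow> (s::'a::order) = s'"
  unfolding is_lub_def by (meson antisym)

lemma way_belowD:
  "way_below T x y \<Longrightarrow> \<forall>n. z n \<in> T \<Longrightarrow> incseq z \<Longrightarrow> is_lub T s z \<Longrightarrow> y \<le> s \<Longrightarrow> \<exists>m. x \<le> z m"
  unfolding way_below_def by blast

lemma way_below_mono: "x \<le> x' \<Longrightarrow> way_below T x' y' \<Longrightarrow> y' \<le> y \<Longrightarrow> way_below T x y"
  unfolding way_below_def by (meson order_trans)

lemma way_below_le_trans: "way_below T x y \<Longrightarrow> y \<le> z \<Longrightarrow> way_below T x z"
  using way_below_mono by blast

lemma le_way_below_trans: "x \<le> y \<Longrightarrow> way_below T y z \<Longrightarrow> way_below T x z"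
  using way_below_mono by blast

lemma way_below_imp_le: "way_below T x y \<Longrightarrow> y \<in> T \<Longrightarrow> x \<le> y"
  using way_belowD[of T x y "\<lambda>_. y" y] by (auto simp: is_lub_def)

definition infty :: "'a::{order,comm_monoid_add} \<Rightarrow> 'a" where
  "infty y = (SOME s. is_lub UNIV s (\<lambda>n. nmul n y))"

locale cu_semigroup =
  fixes S_ty :: "'a::ordered_comm_monoid_add itself"
  assumes Cu_semigroup: "Cu_semigroup (UNIV :: 'a set)"
begin

lemma nonneg [simp]: "0 \<le> (x::'a)"
  using Cu_semigroup unfolding Cu_semigroup_def by auto

lemma exists_is_lub: "incseq (z::nat \<Rightarrow> 'a) \<Longrightarrow> \<exists>s. is_lub UNIV s z"
  using Cu_semigroup unfolding Cu_semigroup_def by auto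

lemma way_below_add: "(a::'a) \<lless> b \<Longrightarrow> c \<lless> d \<Longrightarrow> a + c \<lless> b + d"
  using Cu_semigroup unfolding Cu_semigroup_def by auto

lemma is_lub_add:
  "incseq (z::nat \<Rightarrow> 'a) \<Longrightarrow> incseq w \<Longrightarrow> is_lub UNIV s z \<Longrightarrow> is_lub UNIV t w
    \<Longrightarrow> is_lub UNIV (s + t) (\<lambda>n. z n + w n)"
  using Cu_semigroup unfolding Cu_semigroup_def by blast

lemma way_below_approximation:
  obtains z where "\<And>n. z n \<lless> z (Suc n)" "\<And>n. z n \<lless> (x::'a)" "incseq z" "is_lub UNIV x z"
proof -
  obtain z where z: "\<And>n. z n \<lless> z (Suc n)" "is_lub UNIV x z"
    using Cu_semigroup unfolding Cu_semigroup_def by blast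
  moreover have "incseq z"
    by (rule incseq_SucI) (use z(1) way_below_imp_le in blast)
  moreover have "z n \<lless> x" for n
    using z by (meson is_lub_upper way_below_le_trans)
  ultimately show thesis using that by blast
qed

lemma zero_way_below: "0 \<lless> (x::'a)"
  unfolding way_below_def by auto

lemma way_below_interpolate:
  assumes "(x::'a) \<lless> y"
  obtains z where "x \<lless> z" "z \<lless> y"
proof -
  obtain w where w: "\<And>n. w n \<lless> w (Suc n)" "\<And>n. w n \<lless> y" "incseq w" "is_lub UNIV y w"
    using way_below_approximation by blast
  obtain m where "x \<le> w m" using way_belowD[OF assms _ w(3,4)] by auto
  then show thesis using that w(1,2) le_way_below_trans by blast
qed

lemma le_add_right: "(x::'a) \<le> x + y"
  using add_left_mono[OF nonneg[of y], of x] by simp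

lemma incseq_nmul: "incseq (\<lambda>n. nmul n (x::'a))"
  by (simp add: incseq_def nmul_mono_count)

lemma way_below_nmul: "(x::'a) \<lless> y \<Longrightarrow> nmul n x \<lless> nmul n y"
  by (induction n) (auto intro: way_below_add zero_way_below)

lemma is_lub_nmul:
  "incseq (z::nat \<Rightarrow> 'a) \<Longrightarrow> is_lub UNIV s z \<Longrightarrow> is_lub UNIV (nmul n s) (\<lambda>k. nmul n (z k))"
proof (induction n)
  case 0
  then show ?case by (simp add: is_lub_def)
next
  case (Suc n)
  then show ?case
    using is_lub_add[OF Suc.prems(1) incseq_nmul_seq Suc.prems(2) Suc.IH[OF Suc.prems]] by simp
qed

lemma way_below_nmulE:
  assumes "p \<lless> nmul k u"
  obtains u' where "u' \<lless> u" "p \<le> nmul k (u'::'a)"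
proof -
  obtain z where z: "\<And>n. z n \<lless> u" "incseq z" "is_lub UNIV u z"
    using way_below_approximation by blast
  obtain m where "p \<le> nmul k (z m)"
    using way_belowD[OF assms _ incseq_nmul_seq[OF z(2)] is_lub_nmul[OF z(2,3)]] by blast
  then show thesis using that z(1) by blast
qed

lemma way_below_addE:
  assumes "p \<lless> q + r"
  obtains q' r' where "q' \<lless> q" "r' \<lless> r" "p \<le> q' + (r'::'a)"
proof -
  obtain z where z: "\<And>n. z n \<lless> q" "incseq z" "is_lub UNIV q z"
    using way_below_approximation by blast
  obtain w where w: "\<And>n. w n \<lless> r" "incseq w" "is_lub UNIV r w"
    using way_below_approximation by blast
  have "incseq (\<lambda>n. z n + w n)" using z(2) w(2) by (simp add: incseq_def add_mono)
  then obtain m where "p \<le> z m + w m"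
    using way_belowD[OF assms _ _ is_lub_add[OF z(2) w(2) z(3) w(3)]] by blast
  then show thesis using that z(1) w(1) by blast
qed

lemma is_lub_infty: "is_lub UNIV (infty y) (\<lambda>n. nmul n (y::'a))"
  unfolding infty_def using exists_is_lub[OF incseq_nmul] by (rule someI_ex)

lemma le_infty_iff: "le_infty UNIV x y \<longleftrightarrow> x \<le> infty (y::'a)"
  unfolding le_infty_def using is_lub_infty is_lub_unique by blast

lemma nmul_le_infty: "nmul k y \<le> infty (y::'a)"
  using is_lub_infty by (rule is_lub_upper)

lemma nmul_infty_le: "nmul k (infty y) \<le> infty (y::'a)"
proof (rule is_lub_least[OF is_lub_nmul[OF incseq_nmul is_lub_infty]])
  show "nmul k (nmul n y) \<le> infty y" for n
    by (metis nmul_mult nmul_le_infty)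
qed simp

lemma le_infty_nmul: "x \<le> infty y \<Longrightarrow> nmul k x \<le> infty (y::'a)"
  by (meson nmul_infty_le nmul_mono order_trans)

lemma le_infty_add: "a \<le> infty y \<Longrightarrow> b \<le> infty y \<Longrightarrow> a + b \<le> infty (y::'a)"
  using nmul_infty_le[of 2 y] add_mono[of a "infty y" b "infty y"] by (simp add: numeral_2_eq_2)

lemma infty_mono: "x \<le> y \<Longrightarrow> infty x \<le> infty (y::'a)"
  by (rule is_lub_least[OF is_lub_infty]) (auto intro: nmul_mono order_trans nmul_le_infty)

lemma way_below_inftyE:
  assumes "p \<lless> infty u"
  obtains k u' where "u' \<lless> u" "p \<le> nmul k (u'::'a)"
proof -
  obtain p' where p': "p \<lless> p'" "p' \<lless> infty u" using way_below_interpolate[OF assms] .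
  obtain k where "p' \<le> nmul k u" using way_belowD[OF p'(2) _ incseq_nmul is_lub_infty] by blast
  then have "p \<lless> nmul k u" using p'(1) way_below_le_trans by blast
  then show thesis using that way_below_nmulE by blast
qed

section \<open>Strongly soft elements\<close>

lemma strongly_soft_iff:
  "strongly_soft (x::'a) \<longleftrightarrow> (\<forall>x'. x' \<lless> x \<longrightarrow> (\<exists>t. x' + t \<lless> x \<and> x' \<le> infty t))"
  unfolding strongly_soft_def le_infty_iff ..

lemma strongly_soft_zero: "strongly_soft (0::'a)"
  unfolding strongly_soft_iff
    by (metis add.right_neutral order_trans nonneg way_below_imp_le UNIV_I)

lemma strongly_soft_add:
  assumes a: "strongly_soft (a::'a)" and b: "strongly_soft b"
  shows "strongly_soft (a + b)"
  unfolding strongly_soft_iff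
proof (intro allI impI)
  fix x' assume "x' \<lless> a + b"
  then obtain a' b' where ab: "a' \<lless> a" "b' \<lless> b" "x' \<le> a' + b'" by (rule way_below_addE)
  obtain t1 where t1: "a' + t1 \<lless> a" "a' \<le> infty t1"
    using a ab(1) unfolding strongly_soft_iff by blast
  obtain t2 where t2: "b' + t2 \<lless> b" "b' \<le> infty t2"
    using b ab(2) unfolding strongly_soft_iff by blast
  have "x' + (t1 + t2) \<le> (a' + t1) + (b' + t2)"
    using add_right_mono[OF ab(3), of "t1 + t2"] by (simp add: ac_simps)
  then have "x' + (t1 + t2) \<lless> a + b" using way_below_add[OF t1(1) t2(1)] le_way_below_trans by blast
  moreover have "a' \<le> infty (t1 + t2)" "b' \<le> infty (t1 + t2)"
    using t1(2) t2(2) infty_mono[OF le_add_right] infty_mono[OF le_add_right, of t2 t1]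
    by (auto simp: add.commute intro: order_trans)
  ultimately show "\<exists>t. x' + t \<lless> a + b \<and> x' \<le> infty t"
    using ab(3) le_infty_add order_trans by blast
qed

lemma strongly_soft_lub:
  assumes "incseq (z::nat \<Rightarrow> 'a)" "\<And>n. strongly_soft (z n)" "is_lub UNIV s z"
  shows "strongly_soft s"
  unfolding strongly_soft_iff
proof (intro allI impI)
  fix x' assume "x' \<lless> s"
  then obtain x'' where x'': "x' \<lless> x''" "x'' \<lless> s" by (rule way_below_interpolate)
  obtain m where "x'' \<le> z m" using way_belowD[OF x''(2) _ assms(1,3)] by auto
  then have "x' \<lless> z m" using x''(1) way_below_le_trans by blast
  then obtain t where "x' + t \<lless> z m" "x' \<le> infty t"
    using assms(2) unfolding strongly_soft_iff by blast
  then show "\<exists>t. x' + t \<lless> s \<and> x' \<le> infty t"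
    using is_lub_upper[OF assms(3)] way_below_le_trans by blast
qed

lemma is_lub_soft_set_iff:
  assumes "incseq (z::nat \<Rightarrow> 'a)" "\<And>n. strongly_soft (z n)"
  shows "is_lub soft_set s z \<longleftrightarrow> is_lub UNIV s z"
proof -
  obtain L where L: "is_lub UNIV L z" using exists_is_lub[OF assms(1)] by blast
  then have "strongly_soft L" using strongly_soft_lub assms by blast
  then have "is_lub soft_set L z" using L by (auto simp: is_lub_def soft_set_def)
  then show ?thesis using L is_lub_unique by metis
qed

end

locale divisible_cu_semigroup = cu_semigroup S_ty
  for S_ty :: "'a::ordered_comm_monoid_add itself" +
  assumes two_omega_divisible: "two_omega_divisible (UNIV :: 'a set)"
begin

lemma way_below_half_infty:
  assumes "(x'::'a) \<lless> x"
  obtains y where "y + y \<le> x" "x' \<le> infty y"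
  using two_omega_divisible assms unfolding two_omega_divisible_def le_infty_iff by blast

text \<open>Divisibility gives \<open>y\<close> with \<open>2y \<le> q\<close> that still generates everything way below \<open>q\<close>:
  a piece \<open>t \<lless> y\<close> of one copy is added to \<open>p\<close>, the other copy is the room \<open>q'\<close> for later steps.\<close>

lemma soft_construction_step:
  assumes "p \<lless> infty q"
  obtains t q' where "p + t \<lless> infty q'" "p + t + q' \<le> p + q" "p \<le> infty (t::'a)"
proof -
  obtain k q1 where q1: "q1 \<lless> q" "p \<le> nmul k q1" using way_below_inftyE[OF assms] .
  obtain q2 where q2: "q1 \<lless> q2" "q2 \<lless> q" using way_below_interpolate[OF q1(1)] .
  obtain y where y: "y + y \<le> q" "q2 \<le> infty y" using way_below_half_infty[OF q2(2)] .
  have "q1 \<lless> infty y" using q2(1) y(2) way_below_le_trans by blast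
  then obtain j y1 where y1: "y1 \<lless> y" "q1 \<le> nmul j y1" by (rule way_below_inftyE)
  have p: "p \<le> nmul (k * j) y1"
    using q1(2) nmul_mono[OF y1(2), of k] by (simp add: nmul_mult)
  have "p + y1 \<le> nmul (Suc (k * j)) y1"
    using add_right_mono[OF p, of y1] by (simp add: add.commute)
  moreover have "nmul (Suc (k * j)) y1 \<lless> nmul (Suc (k * j)) y" using way_below_nmul[OF y1(1)] .
  ultimately have "p + y1 \<lless> infty y" using nmul_le_infty way_below_mono by blast
  moreover have "p + y1 + y \<le> p + q"
    using add_right_mono[OF way_below_imp_le[OF y1(1)], of y] y(1)
    by (simp add: add.assoc add_left_mono order_trans)
  moreover have "p \<le> infty y1" using p nmul_le_infty order_trans by blast
  ultimately show thesis using that by blast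
qed

lemma strongly_soft_lub_of_increments:
  assumes p: "\<And>n. p (Suc n) = p n + t n" "\<And>n. p n \<le> infty (t n)" and s: "is_lub UNIV s p"
  shows "strongly_soft (s::'a)"
  unfolding strongly_soft_iff
proof (intro allI impI)
  have inc: "incseq p" by (rule incseq_SucI) (simp add: p(1) le_add_right)
  fix z assume "z \<lless> s"
  then obtain z' where z': "z \<lless> z'" "z' \<lless> s" by (rule way_below_interpolate)
  obtain k where "z' \<le> p k" using way_belowD[OF z'(2) _ inc s] by auto
  then have zk: "z \<lless> p k" using z'(1) way_below_le_trans by blast
  then have "z \<lless> infty (t k)" using p(2) way_below_le_trans by blast
  then obtain K t' where t': "t' \<lless> t k" "z \<le> nmul K t'" by (rule way_below_inftyE)
  have "z + t' \<lless> p (Suc k)" using way_below_add[OF zk t'(1)] p(1) by simp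
  then have "z + t' \<lless> s" using is_lub_upper[OF s] way_below_le_trans by blast
  moreover have "z \<le> infty t'" using t'(2) nmul_le_infty order_trans by blast
  ultimately show "\<exists>t. z + t \<lless> s \<and> z \<le> infty t" by blast
qed

lemma exists_strongly_soft_between:
  assumes "x + u \<le> X" "x \<lless> infty u"
  obtains s where "strongly_soft s" "x \<le> s" "s \<le> (X::'a)"
proof -
  have "\<exists>t q'. p \<lless> infty q \<longrightarrow> p + t \<lless> infty q' \<and> p + t + q' \<le> p + q \<and> p \<le> infty t" for p q :: 'a
    by (blast elim: soft_construction_step)
  then obtain T Q where step: "\<And>p q::'a. p \<lless> infty q \<Longrightarrow>
      p + T p q \<lless> infty (Q p q) \<and> p + T p q + Q p q \<le> p + q \<and> p \<le> infty (T p q)"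
    by metis
  define pq where "pq = rec_nat (x, u) (\<lambda>_ (p, q). (p + T p q, Q p q))"
  define p where "p n = fst (pq n)" for n
  define q where "q n = snd (pq n)" for n
  have p0: "p 0 = x" and pS: "p (Suc n) = p n + T (p n) (q n)"
    and qS: "q (Suc n) = Q (p n) (q n)" for n
    by (simp_all add: p_def q_def pq_def split: prod.split)
  have inv: "p n \<lless> infty (q n) \<and> p n + q n \<le> X" for n
  proof (induction n)
    case 0
    then show ?case using assms by (simp add: p_def q_def pq_def)
  next
    case (Suc n)
    then show ?case using step[of "p n" "q n"] by (auto simp: pS qS intro: order_trans)
  qed
  have "incseq p" by (rule incseq_SucI) (simp add: pS le_add_right)
  then obtain s where s: "is_lub UNIV s p" using exists_is_lub by blast
  have "strongly_soft s"
    using strongly_soft_lub_of_increments[OF pS _ s] step inv by blast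
  moreover have "x \<le> s" using is_lub_upper[OF s, of 0] by (simp add: p0)
  moreover have "s \<le> X" using is_lub_least[OF s] inv le_add_right order_trans by blast
  ultimately show thesis using that by blast
qed

lemma way_below_nmul_infty:
  assumes "(x'::'a) \<lless> x"
  obtains y where "nmul k y \<le> x" "x' \<le> infty y"
proof -
  have "\<exists>y. nmul (2 ^ m) y \<le> x \<and> x' \<le> infty y" if "x' \<lless> x" for m x'
    using that
  proof (induction m arbitrary: x')
    case 0
    then have "x' \<le> infty x" using nmul_le_infty[of 1 x] by (auto dest!: way_below_imp_le)
    then show ?case by auto
  next
    case (Suc m)
    obtain x'' where x'': "x' \<lless> x''" "x'' \<lless> x" using way_below_interpolate[OF Suc.prems] .
    obtain y where y: "nmul (2 ^ m) y \<le> x" "x'' \<le> infty y" using Suc.IH[OF x''(2)] by blast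
    have "x' \<lless> infty y" using x''(1) y(2) way_below_le_trans by blast
    then obtain k y1 where y1: "y1 \<lless> y" "x' \<le> nmul k y1" by (rule way_below_inftyE)
    obtain z where z: "z + z \<le> y" "y1 \<le> infty z" using way_below_half_infty[OF y1(1)] .
    have "nmul (2 ^ Suc m) z = nmul (2 ^ m) (z + z)"
      by (simp add: nmul_add_distrib flip: nmul_add mult_2)
    also have "\<dots> \<le> x" using nmul_mono[OF z(1)] y(1) order_trans by blast
    finally show ?case using y1(2) le_infty_nmul[OF z(2)] order_trans by blast
  qed
  then obtain y where y: "nmul (2 ^ k) y \<le> x" "x' \<le> infty y" using assms by blast
  have "nmul k y \<le> nmul (2 ^ k) y" by (simp add: nmul_mono_count less_imp_le)
  then show thesis using that y order_trans by blast
qed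

lemma exists_strongly_soft_upper_way_below:
  assumes s: "strongly_soft s" and "a \<lless> s" "b \<lless> s"
  obtains q where "strongly_soft q" "a \<le> q" "b \<le> q" "q \<lless> (s::'a)"
proof -
  obtain z where z: "\<And>n. z n \<lless> s" "incseq z" "is_lub UNIV s z"
    using way_below_approximation by blast
  obtain i j where "a \<le> z i" "b \<le> z j"
    using way_belowD[OF \<open>a \<lless> s\<close> _ z(2,3)] way_belowD[OF \<open>b \<lless> s\<close> _ z(2,3)] by auto
  then have ab: "a \<le> z (max i j)" "b \<le> z (max i j)"
    using z(2) by (auto simp: incseq_def intro: order_trans)
  obtain c where c: "z (max i j) \<lless> c" "c \<lless> s" using way_below_interpolate[OF z(1)] .
  obtain t where t: "c + t \<lless> s" "c \<le> infty t" using s c(2) unfolding strongly_soft_iff by blast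
  have "z (max i j) + t \<le> c + t" using way_below_imp_le[OF c(1)] by (simp add: add_right_mono)
  moreover have "z (max i j) \<lless> infty t" using c(1) t(2) way_below_le_trans by blast
  ultimately obtain q where "strongly_soft q" "z (max i j) \<le> q" "q \<le> c + t"
    by (rule exists_strongly_soft_between)
  then show thesis using that ab t(1) le_way_below_trans order_trans by meson
qed

lemma strongly_soft_approximation:
  assumes s: "strongly_soft (s::'a)"
  obtains q where "\<And>k. strongly_soft (q k)" "\<And>k. q k \<lless> s" "incseq q" "is_lub UNIV s q"
proof -
  obtain z where z: "\<And>n. z n \<lless> s" "is_lub UNIV s z"
    using way_below_approximation by blast
  have "\<exists>q. a \<lless> s \<and> b \<lless> s \<longrightarrow> strongly_soft q \<and> a \<le> q \<and> b \<le> q \<and> q \<lless> s" for a b :: 'a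
    by (blast elim: exists_strongly_soft_upper_way_below[OF s])
  then obtain U where U: "\<And>a b. a \<lless> s \<Longrightarrow> b \<lless> s \<Longrightarrow>
      strongly_soft (U a b) \<and> a \<le> U a b \<and> b \<le> U a b \<and> U a b \<lless> s"
    by metis
  define q where "q = rec_nat (U (z 0) (z 0)) (\<lambda>k r. U r (z (Suc k)))"
  have q: "strongly_soft (q k) \<and> q k \<lless> s \<and> z k \<le> q k" for k
    by (induction k) (simp_all add: q_def U z(1))
  have "incseq q"
    by (rule incseq_SucI) (simp add: q_def U z(1) q[unfolded q_def])
  moreover have "is_lub UNIV s q"
    unfolding is_lub_def using q z(2) way_below_imp_le is_lub_least
    by (metis UNIV_I order_trans)
  ultimately show thesis using that q by blast
qed

lemma way_below_soft_set_iff: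
  assumes "strongly_soft (a::'a)" "strongly_soft b"
  shows "way_below soft_set a b \<longleftrightarrow> a \<lless> b"
proof
  assume ab: "way_below soft_set a b"
  obtain q where q: "\<And>k. strongly_soft (q k)" "\<And>k. q k \<lless> b" "incseq q" "is_lub UNIV b q"
    using strongly_soft_approximation[OF assms(2)] by blast
  have "is_lub soft_set b q" using is_lub_soft_set_iff q by blast
  then obtain m where "a \<le> q m" using way_belowD[OF ab _ q(3)] q(1) by (auto simp: soft_set_def)
  then show "a \<lless> b" using q(2) le_way_below_trans by blast
next
  assume "a \<lless> b"
  then show "way_below soft_set a b"
    unfolding way_below_def
    by (metis is_lub_soft_set_iff mem_Collect_eq soft_set_def way_belowD UNIV_I)
qed

end

locale divisible_cu_semigroup_O5_O6_O7 = divisible_cu_semigroup S_ty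
  for S_ty :: "'a::ordered_comm_monoid_add itself" +
  assumes O5: "O5 (UNIV :: 'a set)" and O6: "O6 (UNIV :: 'a set)" and O7: "O7 (UNIV :: 'a set)"
begin

lemma O5E:
  assumes "x + y \<le> z" "x' \<lless> x" "y' \<lless> y"
  obtains c where "y' \<lless> c" "x' + c \<le> z" "z \<le> x + (c::'a)"
  using O5 assms unfolding O5_def by blast

lemma O6E:
  assumes "x' \<lless> x" "x \<le> y + z"
  obtains v w where "v \<le> x" "v \<le> y" "w \<le> x" "w \<le> z" "x' \<le> v + (w::'a)"
  using O6 assms unfolding O6_def by blast

lemma O7E:
  assumes "x' \<lless> x" "x \<le> w" "y' \<lless> y" "y \<le> w"
  obtains z where "x' \<lless> z" "y' \<lless> z" "z \<le> w" "z \<le> x + (y::'a)"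
  using O7 assms unfolding O7_def by blast

text \<open>Two applications of (O6) split \<open>n\<cdot>a\<close> along \<open>c + n\<cdot>w\<close>, and (O7) merges the two pieces
  into a single \<open>z \<le> c\<close>.\<close>

lemma nmul_le_Suc_nmul_below:
  assumes "x' \<lless> a" "a \<le> u + c" "nmul n u \<le> c"
  obtains z where "z \<le> c" "z \<le> nmul (Suc n) a" "nmul n x' \<le> nmul (Suc n) (z::'a)"
proof -
  obtain a1 where a1: "x' \<lless> a1" "a1 \<lless> a" using way_below_interpolate[OF assms(1)] .
  obtain a2 where a2: "a1 \<lless> a2" "a2 \<lless> a" using way_below_interpolate[OF a1(2)] .
  obtain v w where vw: "v \<le> u" "w \<le> a" "w \<le> c" "a2 \<le> v + w"
    using O6E[OF a2(2) assms(2)] by metis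
  have "nmul n a2 \<le> nmul n u + nmul n w"
    using nmul_mono[OF order_trans[OF vw(4) add_right_mono[OF vw(1)]]]
      by (simp add: nmul_add_distrib)
  also have "\<dots> \<le> c + nmul n w" using assms(3) by (rule add_right_mono)
  finally obtain v' w' where v'w': "v' \<le> nmul n a2" "v' \<le> c" "w' \<le> nmul n w" "nmul n a1 \<le> v' + w'"
    using O6E[OF way_below_nmul[OF a2(1)]] by metis
  have "nmul n x' \<lless> v' + nmul n w"
    using way_below_nmul[OF a1(1)] v'w'(4) add_left_mono[OF v'w'(3)]
    by (meson order_trans way_below_le_trans)
  then obtain v0 W where v0W: "v0 \<lless> v'" "W \<lless> nmul n w" "nmul n x' \<le> v0 + W"
    by (rule way_below_addE)
  obtain w0 where w0: "w0 \<lless> w" "W \<le> nmul n w0" using way_below_nmulE[OF v0W(2)] .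
  obtain z where z: "v0 \<lless> z" "w0 \<lless> z" "z \<le> c" "z \<le> v' + w"
    using O7E[OF v0W(1) v'w'(2) w0(1) vw(3)] .
  have "nmul n x' \<le> z + nmul n z"
    using v0W(3) add_mono[OF way_below_imp_le[OF z(1)]
        order_trans[OF w0(2) nmul_mono[OF way_below_imp_le[OF z(2)]]]]
    by (auto intro: order_trans add_left_mono)
  moreover have "z \<le> nmul (Suc n) a"
    using z(4) add_mono[OF order_trans[OF v'w'(1) nmul_mono[OF way_below_imp_le[OF a2(2)]]] vw(2)]
    by (simp add: add.commute)
  ultimately show thesis using that z(3) by simp
qed

text \<open>(O5) splits \<open>x \<le> u\<^sub>3 + c\<close> with \<open>n u\<^sub>3 \<lless> c\<close>; the element \<open>z \<le> c\<close> found inside \<open>c\<close> still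
  leaves the room \<open>u\<^sub>1\<close> needed to grow it into a soft element.\<close>

lemma exists_strongly_soft_Suc_nmul_bound:
  assumes "x' \<lless> x"
  obtains s where "strongly_soft s" "s \<le> x" "nmul n x' \<le> nmul (Suc n) (s::'a)"
proof -
  obtain a where a: "x' \<lless> a" "a \<lless> x" using way_below_interpolate[OF assms] .
  obtain b where b: "a \<lless> b" "b \<lless> x" using way_below_interpolate[OF a(2)] .
  obtain b' where b': "b \<lless> b'" "b' \<lless> x" using way_below_interpolate[OF b(2)] .
  obtain u where u: "nmul (Suc n) u \<le> x" "b' \<le> infty u" using way_below_nmul_infty[OF b'(2)] .
  have "b \<lless> infty u" using b'(1) u(2) way_below_le_trans by blast
  then obtain k u1 where u1: "u1 \<lless> u" "b \<le> nmul k u1" by (rule way_below_inftyE)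
  obtain u2 where u2: "u1 \<lless> u2" "u2 \<lless> u" using way_below_interpolate[OF u1(1)] .
  obtain u3 where u3: "u2 \<lless> u3" "u3 \<lless> u" using way_below_interpolate[OF u2(2)] .
  have "u3 + nmul n u \<le> x"
    using add_right_mono[OF way_below_imp_le[OF u3(2)]] u(1) by (auto intro: order_trans)
  then obtain c where c: "nmul n u3 \<lless> c" "u2 + c \<le> x" "x \<le> u3 + c"
    using O5E[OF _ u3(1) way_below_nmul[OF u3(2)]] by blast
  have "a \<le> u3 + c" using way_below_imp_le[OF a(2)] c(3) by simp
  then obtain z where z: "z \<le> c" "z \<le> nmul (Suc n) a" "nmul n x' \<le> nmul (Suc n) z"
    using nmul_le_Suc_nmul_below[OF a(1) _ way_below_imp_le[OF c(1)]] by blast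
  have "nmul (Suc n) b \<le> infty u1"
    using le_infty_nmul[OF order_trans[OF u1(2) nmul_le_infty]] .
  then have "z \<lless> infty u1"
    using z(2) way_below_nmul[OF b(1)] way_below_mono by blast
  moreover have "z + u1 \<le> x"
    using add_mono[OF z(1) way_below_imp_le[OF u2(1)]] c(2) by (simp add: add.commute)
  ultimately obtain s where s: "strongly_soft s" "z \<le> s" "s \<le> x"
    using exists_strongly_soft_between by blast
  then show thesis using that z(3) nmul_mono[OF s(2)] order_trans by blast
qed

lemma exists_strongly_soft_way_below_Suc_nmul_bound:
  assumes "x' \<lless> x"
  obtains s' s where "strongly_soft s'" "strongly_soft s" "s' \<lless> s" "s \<le> x"
    "nmul n x' \<le> nmul (Suc n) (s'::'a)"
proof -
  obtain x'' where x'': "x' \<lless> x''" "x'' \<lless> x" using way_below_interpolate[OF assms] .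
  obtain s where s: "strongly_soft s" "s \<le> x" "nmul n x'' \<le> nmul (Suc n) s"
    using exists_strongly_soft_Suc_nmul_bound[OF x''(2)] .
  have "nmul n x' \<lless> nmul (Suc n) s" using way_below_nmul[OF x''(1)] s(3) way_below_le_trans by blast
  moreover obtain q where q: "\<And>k. strongly_soft (q k)" "\<And>k. q k \<lless> s" "incseq q" "is_lub UNIV s q"
    using strongly_soft_approximation[OF s(1)] by blast
  ultimately obtain m where "nmul n x' \<le> nmul (Suc n) (q m)"
    using way_belowD[OF _ _ incseq_nmul_seq is_lub_nmul[OF q(3,4)]] by blast
  then show thesis using that q(1,2) s(1,2) by blast
qed

end

section \<open>Functionals and their topology\<close>

lemma ennreal_le_of_mult_le_Suc_mult:
  fixes A B :: ennreal
  assumes le: "\<And>n. of_nat n * A \<le> of_nat (Suc n) * B"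
  shows "A \<le> B"
proof (rule ennreal_le_epsilon)
  fix e :: real assume "B < top" "0 < e"
  then obtain b where b: "B = ennreal b" "0 \<le> b" by (cases B) auto
  obtain n :: nat where n: "b / e < n" using reals_Archimedean2 by blast
  then have "n > 0" using b \<open>0 < e\<close>
    by (metis divide_nonneg_pos of_nat_0_less_iff order_le_less_trans)
  have "b \<le> n * e" using n \<open>0 < e\<close> by (simp add: field_simps)
  then have "B \<le> of_nat n * ennreal e"
    using b \<open>0 < e\<close> by (simp add: ennreal_of_nat_eq_real_of_nat flip: ennreal_mult)
  have "of_nat n * A \<le> of_nat n * B + B" using le[of n] by (simp add: distrib_right add.commute)
  also have "\<dots> \<le> of_nat n * B + of_nat n * ennreal e" using \<open>B \<le> _\<close> by (rule add_left_mono)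
  finally have "of_nat n * A \<le> of_nat n * (B + ennreal e)" by (simp add: distrib_left)
  then show "A \<le> B + ennreal e"
    using \<open>n > 0\<close> by (simp add: ennreal_mult_le_mult_iff of_nat_less_top[THEN less_imp_neq])
qed

lemma functional_eq_0: "\<mu> \<in> functionals T \<Longrightarrow> x \<notin> T \<Longrightarrow> \<mu> x = 0"
  by (simp add: functionals_def)

lemma functional_0: "\<mu> \<in> functionals T \<Longrightarrow> \<mu> 0 = 0"
  by (simp add: functionals_def)

lemma functional_add: "\<mu> \<in> functionals T \<Longrightarrow> x \<in> T \<Longrightarrow> y \<in> T \<Longrightarrow> \<mu> (x + y) = \<mu> x + \<mu> y"
  by (simp add: functionals_def)

lemma functional_mono: "\<mu> \<in> functionals T \<Longrightarrow> x \<in> T \<Longrightarrow> y \<in> T \<Longrightarrow> x \<le> y \<Longrightarrow> \<mu> x \<le> \<mu> y"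
  by (simp add: functionals_def)

lemma functional_lub:
  "\<mu> \<in> functionals T \<Longrightarrow> (\<And>n. z n \<in> T) \<Longrightarrow> incseq z \<Longrightarrow> is_lub T s z \<Longrightarrow> \<mu> s = (SUP n. \<mu> (z n))"
  by (simp add: functionals_def)

lemma functional_mult_le_Suc_mult:
  assumes \<mu>: "\<mu> \<in> functionals T" and closed: "0 \<in> T" "\<And>x y. x \<in> T \<Longrightarrow> y \<in> T \<Longrightarrow> x + y \<in> T"
    and "a \<in> T" "b \<in> T" "nmul n a \<le> nmul (Suc n) b"
  shows "of_nat n * \<mu> a \<le> of_nat (Suc n) * \<mu> b"
proof -
  have nmul: "nmul k c \<in> T \<and> \<mu> (nmul k c) = of_nat k * \<mu> c" if "c \<in> T" for k c
    using that
    by (induction k) (simp_all add: closed functional_0[OF \<mu>] functional_add[OF \<mu>] algebra_simps)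
  show ?thesis using functional_mono[OF \<mu> _ _ assms(6)] nmul assms(4,5) by metis
qed

lemma openin_F_topology: "openin (F_topology T) = F_open T"
  unfolding F_topology_def using topology_inverse'[OF istopology_F_open] .

lemma topspace_F_topology: "topspace (F_topology T) = functionals T"
proof -
  have "F_open T (functionals T)" unfolding F_open_def by auto
  moreover have "F_open T U \<Longrightarrow> U \<subseteq> functionals T" for U unfolding F_open_def by auto
  ultimately show ?thesis unfolding topspace_def openin_F_topology by blast
qed

lemma Limsup_filtermap: "Limsup (filtermap f F) g = Limsup F (\<lambda>x. g (f x))"
proof (rule antisym[OF _ Limsup_filtermap_ge])
  have "Limsup (filtermap f F) g \<le> (SUP x\<in>Collect P. g (f x))" if "eventually P F" for P
  proof -
    have "eventually (\<lambda>y. y \<in> f ` Collect P) (filtermap f F)"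
      using that by (auto simp: eventually_filtermap elim: eventually_mono)
    then have "Limsup (filtermap f F) g \<le> (SUP y\<in>f ` Collect P. g y)"
      unfolding Limsup_def by (intro INF_lower2[of "\<lambda>y. y \<in> f ` Collect P"]) auto
    then show ?thesis by (simp add: image_comp)
  qed
  then show "Limsup (filtermap f F) g \<le> Limsup F (\<lambda>x. g (f x))"
    unfolding Limsup_def[of F] by (intro INF_greatest) auto
qed

lemma Liminf_filtermap: "Liminf (filtermap f F) g = Liminf F (\<lambda>x. g (f x))"
proof (rule antisym[OF Liminf_filtermap_le])
  have "(INF x\<in>Collect P. g (f x)) \<le> Liminf (filtermap f F) g" if "eventually P F" for P
  proof -
    have "eventually (\<lambda>y. y \<in> f ` Collect P) (filtermap f F)"
      using that by (auto simp: eventually_filtermap elim: eventually_mono)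
    then have "(INF y\<in>f ` Collect P. g y) \<le> Liminf (filtermap f F) g"
      unfolding Liminf_def by (intro SUP_upper2[of "\<lambda>y. y \<in> f ` Collect P"]) auto
    then show ?thesis by (simp add: image_comp)
  qed
  then show "Liminf F (\<lambda>x. g (f x)) \<le> Liminf (filtermap f F) g"
    unfolding Liminf_def[of F] by (intro SUP_least) auto
qed

lemma Limsup_ennreal_mult_left:
  fixes c :: ennreal
  assumes "c < top"
  shows "Limsup F (\<lambda>x. c * h x) = c * Limsup F h"
proof (cases "F = bot")
  case False
  have "continuous_on UNIV (\<lambda>y::ennreal. c * y)"
    using ennreal_continuous_on_cmult[OF assms continuous_on_id] by simp
  moreover have "mono (\<lambda>y::ennreal. c * y)" by (auto simp: mono_def mult_left_mono)
  ultimately show ?thesis using Limsup_compose_continuous_mono[OF _ _ False] by blast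
qed (simp add: bot_ennreal)

lemma continuous_map_F_topologyI:
  assumes maps: "\<And>\<mu>. \<mu> \<in> functionals T \<Longrightarrow> f \<mu> \<in> functionals T'"
    and conv: "\<And>F \<mu> x' x. \<mu> \<in> functionals T \<Longrightarrow> eventually (\<lambda>\<nu>. \<nu> \<in> functionals T) F \<Longrightarrow>
      F_conv T F \<mu> \<Longrightarrow> x' \<in> T' \<Longrightarrow> x \<in> T' \<Longrightarrow> way_below T' x' x \<Longrightarrow>
      Limsup F (\<lambda>\<nu>. f \<nu> x') \<le> f \<mu> x \<and> f \<mu> x \<le> Liminf F (\<lambda>\<nu>. f \<nu> x)"
  shows "continuous_map (F_topology T) (F_topology T') f"
  unfolding continuous_map_def topspace_F_topology openin_F_topology
proof (intro conjI allI impI)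
  show "f \<in> functionals T \<rightarrow> functionals T'" using maps by blast
  fix U assume U: "F_open T' U"
  show "F_open T {\<mu> \<in> functionals T. f \<mu> \<in> U}"
    unfolding F_open_def
  proof (intro conjI ballI allI impI)
    fix \<mu> F assume \<mu>: "\<mu> \<in> {\<mu> \<in> functionals T. f \<mu> \<in> U}"
      and F: "eventually (\<lambda>\<nu>. \<nu> \<in> functionals T) F \<and> F_conv T F \<mu>"
    have "eventually (\<lambda>\<nu>. \<nu> \<in> functionals T') (filtermap f F)"
      using F maps by (auto simp: eventually_filtermap elim: eventually_mono)
    moreover have "F_conv T' (filtermap f F) (f \<mu>)"
      using conv \<mu> F by (simp add: F_conv_def Limsup_filtermap Liminf_filtermap)
    ultimately have "eventually (\<lambda>\<nu>. \<nu> \<in> U) (filtermap f F)"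
      using U \<mu> unfolding F_open_def by blast
    then show "eventually (\<lambda>\<nu>. \<nu> \<in> {\<mu> \<in> functionals T. f \<mu> \<in> U}) F"
      using F by (simp add: eventually_filtermap eventually_conj_iff)
  qed auto
qed

section \<open>Restriction and extension of functionals\<close>

definition soft_restrict :: "('a::ordered_comm_monoid_add \<Rightarrow> ennreal) \<Rightarrow> 'a \<Rightarrow> ennreal" where
  "soft_restrict \<mu> = (\<lambda>x. if x \<in> soft_set then \<mu> x else 0)"

definition soft_extend :: "('a::ordered_comm_monoid_add \<Rightarrow> ennreal) \<Rightarrow> 'a \<Rightarrow> ennreal" where
  "soft_extend \<rho> x = (SUP s \<in> {s. strongly_soft s \<and> s \<le> x}. \<rho> s)"

lemma soft_extend_upper: "strongly_soft s \<Longrightarrow> s \<le> x \<Longrightarrow> \<rho> s \<le> soft_extend \<rho> x"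
  unfolding soft_extend_def by (rule SUP_upper) auto

lemma soft_extend_mono: "x \<le> y \<Longrightarrow> soft_extend \<rho> x \<le> soft_extend \<rho> y"
  unfolding soft_extend_def by (rule SUP_subset_mono) (auto intro: order_trans)

lemma soft_extend_soft_restrict: "soft_extend (soft_restrict \<mu>) = soft_extend \<mu>"
  unfolding soft_extend_def soft_restrict_def soft_set_def by (intro ext SUP_cong) auto

lemma soft_extend_eq_on_soft:
  assumes "\<rho> \<in> functionals soft_set" "strongly_soft x"
  shows "soft_extend \<rho> x = \<rho> x"
proof (rule antisym)
  show "soft_extend \<rho> x \<le> \<rho> x"
    unfolding soft_extend_def using functional_mono[OF assms(1)] assms(2)
    by (intro SUP_least) (auto simp: soft_set_def)
qed (use assms(2) soft_extend_upper in blast)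

lemma soft_restrict_soft_extend:
  "\<rho> \<in> functionals soft_set \<Longrightarrow> soft_restrict (soft_extend \<rho>) = \<rho>"
  by (auto simp: soft_restrict_def soft_extend_eq_on_soft functional_eq_0 soft_set_def)

context cu_semigroup
begin

lemma zero_mem_soft_set: "(0::'a) \<in> soft_set"
  by (simp add: soft_set_def strongly_soft_zero)

lemma add_mem_soft_set: "(x::'a) \<in> soft_set \<Longrightarrow> y \<in> soft_set \<Longrightarrow> x + y \<in> soft_set"
  by (simp add: soft_set_def strongly_soft_add)

lemma soft_restrict_functional:
  assumes \<mu>: "\<mu> \<in> functionals (UNIV::'a set)"
  shows "soft_restrict \<mu> \<in> functionals soft_set"
  unfolding functionals_def mem_Collect_eq
proof (intro conjI allI ballI impI)
  fix z and s :: 'a assume z: "(\<forall>n. z n \<in> soft_set) \<and> incseq z \<and> is_lub soft_set s z"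
  then have "is_lub UNIV s z" "s \<in> soft_set"
    using is_lub_soft_set_iff[of z s] by (auto simp: soft_set_def is_lub_def)
  then show "soft_restrict \<mu> s = (SUP n. soft_restrict \<mu> (z n))"
    using functional_lub[OF \<mu>, of z s] z by (simp add: soft_restrict_def)
qed (auto simp: soft_restrict_def zero_mem_soft_set add_mem_soft_set
    functional_0[OF \<mu>] functional_add[OF \<mu>] functional_mono[OF \<mu>])

lemma soft_extend_0: "\<rho> \<in> functionals soft_set \<Longrightarrow> soft_extend \<rho> (0::'a) = 0"
  using soft_extend_eq_on_soft[of \<rho> 0] strongly_soft_zero functional_0 by metis

lemma soft_extend_add_ge:
  assumes \<rho>: "\<rho> \<in> functionals soft_set"
  shows "soft_extend \<rho> x + soft_extend \<rho> y \<le> soft_extend \<rho> (x + y::'a)"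
proof -
  have ne: "{s. strongly_soft s \<and> s \<le> (w::'a)} \<noteq> {}" for w using strongly_soft_zero by auto
  have "\<rho> a + \<rho> b \<le> soft_extend \<rho> (x + y)"
    if "strongly_soft a" "a \<le> x" "strongly_soft b" "b \<le> y" for a b
  proof -
    have "\<rho> a + \<rho> b = \<rho> (a + b)" using functional_add[OF \<rho>] that by (simp add: soft_set_def)
    also have "\<dots> \<le> soft_extend \<rho> (x + y)"
      using that by (intro soft_extend_upper strongly_soft_add add_mono)
    finally show ?thesis .
  qed
  then have "\<rho> a + soft_extend \<rho> y \<le> soft_extend \<rho> (x + y)" if "strongly_soft a" "a \<le> x" for a
    unfolding soft_extend_def[of \<rho> y] ennreal_SUP_add_right[OF ne]
      using that by (blast intro: SUP_least)
  then show ?thesis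
    unfolding soft_extend_def[of \<rho> x] ennreal_SUP_add_left[OF ne, symmetric]
      by (blast intro: SUP_least)
qed

end

context divisible_cu_semigroup
begin

lemma soft_extend_lub:
  assumes \<rho>: "\<rho> \<in> functionals soft_set" and z: "incseq z" "is_lub UNIV L (z::nat \<Rightarrow> 'a)"
  shows "soft_extend \<rho> L = (SUP n. soft_extend \<rho> (z n))"
proof (rule antisym)
  show "(SUP n. soft_extend \<rho> (z n)) \<le> soft_extend \<rho> L"
    using is_lub_upper[OF z(2)] soft_extend_mono by (blast intro: SUP_least)
  have "\<rho> s \<le> (SUP n. soft_extend \<rho> (z n))" if s: "strongly_soft s" "s \<le> L" for s
  proof -
    obtain q where q: "\<And>k. strongly_soft (q k)" "\<And>k. q k \<lless> s" "incseq q" "is_lub UNIV s q"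
      using strongly_soft_approximation[OF s(1)] by blast
    have "\<rho> (q k) \<le> (SUP n. soft_extend \<rho> (z n))" for k
    proof -
      obtain m where "q k \<le> z m" using way_belowD[OF q(2)[of k] _ z] s(2) by blast
      then show ?thesis using q(1) soft_extend_upper by (blast intro: SUP_upper2)
    qed
    moreover have "\<rho> s = (SUP k. \<rho> (q k))"
      using functional_lub[OF \<rho>, of q s] is_lub_soft_set_iff q by (simp add: soft_set_def)
    ultimately show ?thesis by (simp add: SUP_least)
  qed
  then show "soft_extend \<rho> L \<le> (SUP n. soft_extend \<rho> (z n))"
    unfolding soft_extend_def[of \<rho> L] by (blast intro: SUP_least)
qed

lemma F_conv_soft_setD:
  assumes "F_conv soft_set F \<rho>" "strongly_soft s'" "strongly_soft s" "s' \<lless> (s::'a)"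
  shows "Limsup F (\<lambda>\<nu>. \<nu> s') \<le> \<rho> s" "\<rho> s \<le> Liminf F (\<lambda>\<nu>. \<nu> s)"
  using assms way_below_soft_set_iff unfolding F_conv_def by (auto simp: soft_set_def)

lemma continuous_soft_restrict:
  "continuous_map (F_topology (UNIV::'a set)) (F_topology soft_set) soft_restrict"
proof (rule continuous_map_F_topologyI)
  fix F :: "('a \<Rightarrow> ennreal) filter" and \<mu> and x' x :: 'a
  assume "F_conv UNIV F \<mu>" "x' \<in> soft_set" "x \<in> soft_set" "way_below soft_set x' x"
  then show "Limsup F (\<lambda>\<nu>. soft_restrict \<nu> x') \<le> soft_restrict \<mu> x \<and>
      soft_restrict \<mu> x \<le> Liminf F (\<lambda>\<nu>. soft_restrict \<nu> x)"
    using way_below_soft_set_iff by (simp add: soft_restrict_def F_conv_def soft_set_def)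
qed (rule soft_restrict_functional)

end

context divisible_cu_semigroup_O5_O6_O7
begin

lemma soft_functional_mult_le_Suc_mult:
  assumes "\<rho> \<in> functionals soft_set" "strongly_soft a" "strongly_soft b"
    and "nmul n a \<le> nmul (Suc n) (b::'a)"
  shows "of_nat n * \<rho> a \<le> of_nat (Suc n) * \<rho> b"
  using functional_mult_le_Suc_mult[OF assms(1) zero_mem_soft_set add_mem_soft_set _ _ assms(4)]
    assms(2,3)
  by (simp add: soft_set_def)

lemma functional_le_soft_extend:
  assumes \<mu>: "\<mu> \<in> functionals UNIV" and "x' \<lless> (x::'a)"
  shows "\<mu> x' \<le> soft_extend \<mu> x"
proof (rule ennreal_le_of_mult_le_Suc_mult)
  fix n
  obtain s where s: "strongly_soft s" "s \<le> x" "nmul n x' \<le> nmul (Suc n) s"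
    using exists_strongly_soft_Suc_nmul_bound[OF assms(2)] .
  have "of_nat n * \<mu> x' \<le> of_nat (Suc n) * \<mu> s"
    using functional_mult_le_Suc_mult[OF \<mu> _ _ _ _ s(3)] by simp
  also have "\<dots> \<le> of_nat (Suc n) * soft_extend \<mu> x"
    using soft_extend_upper[OF s(1,2)] by (rule mult_left_mono) simp
  finally show "of_nat n * \<mu> x' \<le> of_nat (Suc n) * soft_extend \<mu> x" .
qed

lemma soft_extend_eq_self:
  assumes \<mu>: "\<mu> \<in> functionals (UNIV::'a set)"
  shows "soft_extend \<mu> = \<mu>"
proof
  fix x :: 'a
  show "soft_extend \<mu> x = \<mu> x"
  proof (rule antisym)
    show "soft_extend \<mu> x \<le> \<mu> x"
      unfolding soft_extend_def by (auto intro: SUP_least functional_mono[OF \<mu>])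
    obtain z where z: "\<And>n. z n \<lless> x" "incseq z" "is_lub UNIV x z"
      using way_below_approximation by blast
    have "\<mu> x = (SUP n. \<mu> (z n))" using functional_lub[OF \<mu> _ z(2,3)] by simp
    also have "\<dots> \<le> soft_extend \<mu> x"
      using functional_le_soft_extend[OF \<mu> z(1)] by (rule SUP_least)
    finally show "\<mu> x \<le> soft_extend \<mu> x" .
  qed
qed

lemma soft_extend_add_le:
  assumes \<rho>: "\<rho> \<in> functionals soft_set"
  shows "soft_extend \<rho> (x + y) \<le> soft_extend \<rho> x + soft_extend \<rho> (y::'a)"
proof -
  have bound: "\<rho> q \<le> soft_extend \<rho> x + soft_extend \<rho> y"
    if q: "strongly_soft q" "q \<lless> x + y" for q
  proof -
    obtain x0 y0 where xy: "x0 \<lless> x" "y0 \<lless> y" "q \<le> x0 + y0" using q(2) by (rule way_below_addE)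
    show ?thesis
    proof (rule ennreal_le_of_mult_le_Suc_mult)
      fix n
      obtain sx where sx: "strongly_soft sx" "sx \<le> x" "nmul n x0 \<le> nmul (Suc n) sx"
        using exists_strongly_soft_Suc_nmul_bound[OF xy(1)] .
      obtain sy where sy: "strongly_soft sy" "sy \<le> y" "nmul n y0 \<le> nmul (Suc n) sy"
        using exists_strongly_soft_Suc_nmul_bound[OF xy(2)] .
      have "nmul n q \<le> nmul (Suc n) (sx + sy)"
        using nmul_mono[OF xy(3), of n] add_mono[OF sx(3) sy(3)]
        by (simp only: nmul_add_distrib order_trans)
      then have "of_nat n * \<rho> q \<le> of_nat (Suc n) * (\<rho> sx + \<rho> sy)"
        using soft_functional_mult_le_Suc_mult[OF \<rho> q(1) strongly_soft_add[OF sx(1) sy(1)]]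
          functional_add[OF \<rho>] sx(1) sy(1) by (simp add: soft_set_def)
      also have "\<dots> \<le> of_nat (Suc n) * (soft_extend \<rho> x + soft_extend \<rho> y)"
        using sx sy by (intro mult_left_mono add_mono soft_extend_upper) simp_all
      finally show "of_nat n * \<rho> q \<le> of_nat (Suc n) * (soft_extend \<rho> x + soft_extend \<rho> y)" .
    qed
  qed
  have "\<rho> s \<le> soft_extend \<rho> x + soft_extend \<rho> y" if s: "strongly_soft s" "s \<le> x + y" for s
  proof -
    obtain q where q: "\<And>k. strongly_soft (q k)" "\<And>k. q k \<lless> s" "incseq q" "is_lub UNIV s q"
      using strongly_soft_approximation[OF s(1)] by blast
    have "\<rho> s = (SUP k. \<rho> (q k))"
      using functional_lub[OF \<rho>, of q s] is_lub_soft_set_iff q by (simp add: soft_set_def)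
    also have "\<dots> \<le> soft_extend \<rho> x + soft_extend \<rho> y"
      using bound q(1,2) s(2) way_below_le_trans by (blast intro: SUP_least)
    finally show ?thesis .
  qed
  then show ?thesis unfolding soft_extend_def[of \<rho> "x + y"] by (blast intro: SUP_least)
qed

lemma soft_extend_functional:
  assumes \<rho>: "\<rho> \<in> functionals soft_set"
  shows "soft_extend \<rho> \<in> functionals (UNIV::'a set)"
  unfolding functionals_def
  using soft_extend_0[OF \<rho>] soft_extend_add_le[OF \<rho>] soft_extend_add_ge[OF \<rho>] soft_extend_mono
    soft_extend_lub[OF \<rho>]
  by (auto intro: antisym)

lemma Limsup_soft_extend_le:
  fixes F :: "('a \<Rightarrow> ennreal) filter"
  assumes \<rho>: "\<rho> \<in> functionals soft_set" and F: "eventually (\<lambda>\<nu>. \<nu> \<in> functionals soft_set) F"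
    "F_conv soft_set F \<rho>" and "x' \<lless> (x::'a)"
  shows "Limsup F (\<lambda>\<nu>. soft_extend \<nu> x') \<le> soft_extend \<rho> x"
proof (rule ennreal_le_of_mult_le_Suc_mult)
  fix n
  obtain s' s where s: "strongly_soft s'" "strongly_soft s" "s' \<lless> s" "s \<le> x"
      "nmul n x' \<le> nmul (Suc n) s'"
    using exists_strongly_soft_way_below_Suc_nmul_bound[OF assms(4)] .
  have "eventually (\<lambda>\<nu>. of_nat n * soft_extend \<nu> x' \<le> of_nat (Suc n) * \<nu> s') F"
    using F(1)
  proof (rule eventually_mono)
    fix \<nu> :: "'a \<Rightarrow> ennreal" assume \<nu>: "\<nu> \<in> functionals soft_set"
    show "of_nat n * soft_extend \<nu> x' \<le> of_nat (Suc n) * \<nu> s'"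
      using functional_mult_le_Suc_mult[OF soft_extend_functional[OF \<nu>] _ _ _ _ s(5)]
      by (simp add: soft_extend_eq_on_soft[OF \<nu> s(1)])
  qed
  then have "of_nat n * Limsup F (\<lambda>\<nu>. soft_extend \<nu> x') \<le> of_nat (Suc n) * Limsup F (\<lambda>\<nu>. \<nu> s')"
    by (simp add: Limsup_mono of_nat_less_top flip: Limsup_ennreal_mult_left)
  also have "\<dots> \<le> of_nat (Suc n) * soft_extend \<rho> x"
    using F_conv_soft_setD(1)[OF F(2) s(1-3)] soft_extend_upper[OF s(2,4)]
    by (intro mult_left_mono) (auto intro: order_trans)
  finally show "of_nat n * Limsup F (\<lambda>\<nu>. soft_extend \<nu> x') \<le> of_nat (Suc n) * soft_extend \<rho> x" .
qed

lemma soft_extend_le_Liminf: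
  fixes F :: "('a \<Rightarrow> ennreal) filter"
  assumes F: "eventually (\<lambda>\<nu>. \<nu> \<in> functionals soft_set) F" "F_conv soft_set F \<rho>"
  shows "soft_extend \<rho> x \<le> Liminf F (\<lambda>\<nu>. soft_extend \<nu> (x::'a))"
  unfolding soft_extend_def[of \<rho>]
proof (rule SUP_least, clarify)
  fix s assume s: "strongly_soft s" "s \<le> x"
  have "\<rho> s \<le> Liminf F (\<lambda>\<nu>. \<nu> s)"
    using F_conv_soft_setD(2)[OF F(2) strongly_soft_zero s(1) zero_way_below] .
  also have "\<dots> \<le> Liminf F (\<lambda>\<nu>. soft_extend \<nu> x)"
    using F(1) by (intro Liminf_mono) (auto elim: eventually_mono simp: s soft_extend_upper)
  finally show "\<rho> s \<le> Liminf F (\<lambda>\<nu>. soft_extend \<nu> x)" .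
qed

lemma continuous_soft_extend:
  "continuous_map (F_topology soft_set) (F_topology (UNIV::'a set)) soft_extend"
  by (rule continuous_map_F_topologyI)
    (auto intro: soft_extend_functional Limsup_soft_extend_le soft_extend_le_Liminf)

lemma homeomorphic_map_soft_restrict:
  "homeomorphic_map (F_topology (UNIV::'a set)) (F_topology soft_set) soft_restrict"
  unfolding homeomorphic_map_maps homeomorphic_maps_def topspace_F_topology
  using continuous_soft_restrict continuous_soft_extend soft_extend_eq_self
    soft_restrict_soft_extend
  by (intro exI[of _ soft_extend]) (auto simp: soft_extend_soft_restrict)

end

theorem theorem5p14:
  fixes S_ty :: "'a::ordered_comm_monoid_add itself"
  assumes "Cu_semigroup (UNIV :: 'a set)"
    and "O5 (UNIV :: 'a set)" and "O6 (UNIV :: 'a set)" and "O7 (UNIV :: 'a set)"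
    and "two_omega_divisible (UNIV :: 'a set)"
  shows "homeomorphic_map (F_topology (UNIV :: 'a set)) (F_topology (soft_set :: 'a set))
           (\<lambda>\<mu> x. if x \<in> soft_set then \<mu> x else 0)"
proof -
  interpret divisible_cu_semigroup_O5_O6_O7 S_ty
    using assms by unfold_locales
  show ?thesis
    using homeomorphic_map_soft_restrict unfolding soft_restrict_def .
qed

end
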